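(* Let $\omega_c>0$. For $\nu>0$, $k\in\mathbb Z^3$ and $t\ge0$ define $$S(t,k)=\exp\Big[-\nu\int_0^t|k_3|^2\Big(\frac{1-e^{-\nu(t-s)}}{\nu}\Big)^2ds\Big]\exp\Big[-\frac{\nu|k_\perp|^2}{\nu^2+\omega_c^2}\int_0^t\Big(\big[1-\cos\omega_c(t-s)\,e^{-\nu(t-s)}\big]^2+e^{-2\nu(t-s)}\sin^2\omega_c(t-s)\Big)ds\Big].$$ Then there exist $\nu_1>0$ and $\delta_0>0$ such that for all $\nu\in(0,\nu_1)$ and all $k$ with $k_3\neq0$, the function $t\mapsto S(t,k)$ is strictly decreasing on $[0,\infty)$ and for all $t\ge0$ $$0<S(t,k)\le\exp\big(-\delta_0\min(\nu k_3^2t^3,\nu^{-1}k_3^2t)\big)\exp\big(-\delta_0\nu|k_\perp|^2\min(t^3,t)\big).$$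
   Context: $k_\perp=(k_1,k_2,0)$, $|k_\perp|^2=k_1^2+k_2^2$. $S$ is the collisional damping factor along the characteristics of the Fourier-transformed linearized Vlasov–Fokker–Planck equation in a uniform magnetic field with cyclotron frequency $\omega_c$ and collision frequency $\nu$. *)

theory Defs
  imports "HOL-Analysis.Analysis"
begin

definition dampS :: "real \<Rightarrow> real \<Rightarrow> real \<Rightarrow> int \<Rightarrow> int \<Rightarrow> int \<Rightarrow> real" where
  "dampS wc nu t k1 k2 k3 =
     exp (- nu * integral {0..t}
            (\<lambda>s. (real_of_int k3)\<^sup>2 * ((1 - exp (- nu * (t - s))) / nu)\<^sup>2))
   * exp (- (nu * (real_of_int k1 ^ 2 + real_of_int k2 ^ 2) / (nu\<^sup>2 + wc\<^sup>2))
          * integral {0..t}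
            (\<lambda>s. (1 - cos (wc * (t - s)) * exp (- nu * (t - s)))\<^sup>2
                 + exp (- 2 * nu * (t - s)) * (sin (wc * (t - s)))\<^sup>2))"

end

theory Submission
  imports Defs
begin

(* After the substitution u = t - s the damping factor is
     exp (- (nu k3^2 P(t) + nu |k_perp|^2 / (nu^2 + wc^2) Q(t))),
   where P and Q integrate nonnegative kernels over [0, t] and the kernel of P is positive
   for u > 0; hence S > 0 and S is strictly decreasing. The kernel of P is increasing and
   at least (u / (1 + nu u))^2, so P(t) >= t/2 * kernel(t/2) is of order min (t^3, t / nu^2).
   The kernel of Q equals (1 - e^(-nu u))^2 + 2 e^(-nu u) (1 - cos (wc u)) >= (1 - cos (wc u)) / 2,
   whose integral (wc t - sin (wc t)) / (2 wc) is of order min (t^3, t). For nu <= 1 the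
   prefactor nu / (nu^2 + wc^2) is at least nu / (1 + wc^2). *)

lemma integral_Icc0_reflect:
  fixes f :: "real \<Rightarrow> 'a::euclidean_space"
  shows "integral {0..t} (\<lambda>s. f (t - s)) = integral {0..t} f"
proof -
  have "integral {0..t} (\<lambda>s. f (t - s)) = integral {-t..0} (f \<circ> (+) t)"
    using Henstock_Kurzweil_Integration.integral_reflect_real[of 0 "-t" "f \<circ> (+) t"] by simp
  also have "\<dots> = integral {0..t} f"
    by (simp add: integral_shift_Icc_real)
  finally show ?thesis .
qed

lemma mono_on_integral_Icc:
  fixes f :: "real \<Rightarrow> real"
  assumes "continuous_on {a..} f" and "\<And>x. a \<le> x \<Longrightarrow> 0 \<le> f x"
  shows "mono_on {a..} (\<lambda>t. integral {a..t} f)"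
proof (rule mono_onI)
  fix s t assume "s \<in> {a..}" "t \<in> {a..}" "s \<le> t"
  then have "integral {a..t} f = integral {a..s} f + integral {s..t} f"
    by (intro Henstock_Kurzweil_Integration.integral_combine[symmetric]
        integrable_continuous_interval continuous_on_subset[OF assms(1)]) auto
  moreover have "0 \<le> integral {s..t} f"
    using \<open>s \<in> {a..}\<close> assms by (intro integral_nonneg integrable_continuous_interval
        continuous_on_subset[OF assms(1)]) auto
  ultimately show "integral {a..s} f \<le> integral {a..t} f" by simp
qed

lemma strict_mono_on_integral_Icc:
  fixes f :: "real \<Rightarrow> real"
  assumes "continuous_on {a..} f" and "\<And>x. a < x \<Longrightarrow> 0 < f x"
  shows "strict_mono_on {a..} (\<lambda>t. integral {a..t} f)"
proof (rule strict_mono_onI)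
  fix s t assume "s \<in> {a..}" "t \<in> {a..}" "s < t"
  then have "integral {a..t} f = integral {a..s} f + integral {s..t} f"
    by (intro Henstock_Kurzweil_Integration.integral_combine[symmetric]
        integrable_continuous_interval continuous_on_subset[OF assms(1)]) auto
  moreover have "integral {s..t} (\<lambda>_. 0) < integral {s..t} f"
    using \<open>s \<in> {a..}\<close> \<open>s < t\<close> assms
    by (intro integral_less_real continuous_on_subset[OF assms(1)]) auto
  ultimately show "integral {a..s} f < integral {a..t} f" by simp
qed

lemma integral_ge_midpoint:
  fixes f :: "real \<Rightarrow> real"
  assumes "continuous_on {a..b} f" "mono_on {a..b} f" "0 \<le> f a" "a \<le> b"
  shows "(b - a) / 2 * f ((a + b) / 2) \<le> integral {a..b} f"
proof -
  define m where "m = (a + b) / 2"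
  have m: "a \<le> m" "m \<le> b" using assms(4) by (auto simp: m_def)
  have int: "f integrable_on {a..m}" "f integrable_on {m..b}"
    using m by (auto intro!: integrable_continuous_interval continuous_on_subset[OF assms(1)])
  have "0 \<le> f x" if "x \<in> {a..m}" for x
    using that m assms(3) mono_onD[OF assms(2), of a x] by auto
  then have "0 \<le> integral {a..m} f"
    using int(1) by (rule integral_nonneg[rotated])
  moreover have "f m \<le> f x" if "x \<in> {m..b}" for x
    using that m mono_onD[OF assms(2), of m x] by auto
  then have "integral {m..b} (\<lambda>_. f m) \<le> integral {m..b} f"
    using int(2) by (intro integral_le) auto
  moreover have "integral {a..b} f = integral {a..m} f + integral {m..b} f"
    using m assms(1) by (intro Henstock_Kurzweil_Integration.integral_combine[symmetric]
        integrable_continuous_interval) auto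
  ultimately show ?thesis
    using m by (simp add: m_def field_simps)
qed

lemma x_minus_sin_ge:
  fixes x :: real
  assumes "0 \<le> x"
  shows "min (x ^ 3) x / 15 \<le> x - sin x"
proof (cases "x \<le> 2")
  case True
  have "\<bar>sin x - (x - x ^ 3 / 6)\<bar> \<le> x ^ 5 / 120"
    using Maclaurin_sin_bound[of x 5] assms
    by (simp add: sin_coeff_def lessThan_nat_numeral fact_numeral)
  then have "sin x \<le> x - x ^ 3 / 6 + x ^ 5 / 120"
    by linarith
  moreover have "x ^ 3 * x ^ 2 \<le> x ^ 3 * 2 ^ 2"
    using True assms by (intro mult_left_mono power_mono) auto
  then have "x ^ 5 \<le> 4 * x ^ 3"
    by (simp add: power_add[symmetric])
  moreover have "0 \<le> x ^ 3"
    using assms by simp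
  ultimately have "x ^ 3 / 15 \<le> x - sin x"
    by linarith
  then show ?thesis
    by (simp add: min_le_iff_disj)
next
  case False
  then show ?thesis using sin_le_one[of x] by linarith
qed

lemma min_cube_mult_ge:
  fixes a t :: real
  assumes "0 \<le> a" "0 \<le> t"
  shows "a * min (a\<^sup>2) 1 * min (t ^ 3) t \<le> min ((a * t) ^ 3) (a * t)"
proof -
  have "a * min (a\<^sup>2) 1 * min (t ^ 3) t \<le> a * a\<^sup>2 * t ^ 3"
    using assms by (intro mult_mono mult_left_mono) auto
  moreover have "a * min (a\<^sup>2) 1 * min (t ^ 3) t \<le> a * 1 * t"
    using assms by (intro mult_mono mult_left_mono) auto
  moreover have "a * a\<^sup>2 * t ^ 3 = (a * t) ^ 3"
    by algebra
  ultimately show ?thesis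
    by simp
qed

(* The integrands of the two exponents of dampS in the variable u = t - s: the first belongs to
   k3, the wave number along the magnetic field, the second to k_perp. *)
definition par_kernel :: "real \<Rightarrow> real \<Rightarrow> real" where
  "par_kernel nu u = ((1 - exp (- nu * u)) / nu)\<^sup>2"

definition perp_kernel :: "real \<Rightarrow> real \<Rightarrow> real \<Rightarrow> real" where
  "perp_kernel wc nu u =
     (1 - cos (wc * u) * exp (- nu * u))\<^sup>2 + exp (- 2 * nu * u) * (sin (wc * u))\<^sup>2"

lemma dampS_eq_exp:
  "dampS wc nu t k1 k2 k3 =
     exp (- (nu * (real_of_int k3)\<^sup>2 * integral {0..t} (par_kernel nu)
          + nu * (real_of_int k1 ^ 2 + real_of_int k2 ^ 2) / (nu\<^sup>2 + wc\<^sup>2)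
            * integral {0..t} (perp_kernel wc nu)))"
  using integral_Icc0_reflect[of t "par_kernel nu"] integral_Icc0_reflect[of t "perp_kernel wc nu"]
  by (simp add: dampS_def par_kernel_def perp_kernel_def exp_add[symmetric] algebra_simps)

lemma continuous_on_par_kernel: "continuous_on A (par_kernel nu)"
  unfolding par_kernel_def divide_inverse by (intro continuous_intros)

lemma continuous_on_perp_kernel: "continuous_on A (perp_kernel wc nu)"
  unfolding perp_kernel_def by (intro continuous_intros)

lemma par_kernel_pos:
  assumes "0 < nu" "0 < u"
  shows "0 < par_kernel nu u"
  using assms by (simp add: par_kernel_def)

lemma mono_on_par_kernel:
  assumes "0 < nu"
  shows "mono_on {0..} (par_kernel nu)"
proof (rule mono_onI)
  fix u v :: real assume "u \<in> {0..}" "v \<in> {0..}" "u \<le> v"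
  then have "0 \<le> (1 - exp (- nu * u)) / nu"
      "(1 - exp (- nu * u)) / nu \<le> (1 - exp (- nu * v)) / nu"
    using assms by (auto intro!: divide_right_mono simp: mult_left_mono)
  then show "par_kernel nu u \<le> par_kernel nu v"
    unfolding par_kernel_def by (simp add: power_mono)
qed

lemma par_kernel_ge:
  assumes "0 < nu" "0 \<le> u"
  shows "(u / (1 + nu * u))\<^sup>2 \<le> par_kernel nu u"
proof -
  have pos: "0 < 1 + nu * u"
    using assms by (simp add: add_pos_nonneg)
  have "exp (- (nu * u)) \<le> 1 / (1 + nu * u)"
    using exp_ge_add_one_self[of "nu * u"] pos by (simp add: exp_minus divide_simps)
  moreover have "1 - 1 / (1 + nu * u) = nu * u / (1 + nu * u)"
    using pos by (simp add: field_simps)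
  ultimately have "nu * u / (1 + nu * u) \<le> 1 - exp (- (nu * u))"
    by linarith
  then have "u / (1 + nu * u) \<le> (1 - exp (- nu * u)) / nu"
    using assms by (simp add: field_simps)
  then show ?thesis
    unfolding par_kernel_def using assms by (intro power_mono) auto
qed

lemma integral_par_kernel_ge:
  assumes "0 < nu" "0 \<le> t"
  shows "min (nu * t ^ 3) (t / nu) / 32 \<le> nu * integral {0..t} (par_kernel nu)"
proof -
  define q where "q = t / (2 + nu * t)"
  have pos: "0 < 2 + nu * t"
    using assms by (simp add: add_pos_nonneg)
  have "t / 2 * q\<^sup>2 \<le> t / 2 * par_kernel nu (t / 2)"
    using par_kernel_ge[of nu "t / 2"] assms
    by (intro mult_left_mono) (auto simp: q_def field_simps)
  also have "\<dots> \<le> integral {0..t} (par_kernel nu)"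
    using integral_ge_midpoint[of 0 t "par_kernel nu"] assms continuous_on_par_kernel
      mono_on_subset[OF mono_on_par_kernel] by (auto simp: par_kernel_def)
  finally have "nu * (t / 2 * q\<^sup>2) \<le> nu * integral {0..t} (par_kernel nu)"
    using assms by (intro mult_left_mono) auto
  moreover have "min (nu * t ^ 3) (t / nu) / 32 \<le> nu * (t / 2 * q\<^sup>2)"
  proof (cases "nu * t \<le> 2")
    case True
    then have "t / 4 \<le> q"
      unfolding q_def using assms pos by (intro divide_left_mono) auto
    then have "nu * (t / 2 * (t / 4)\<^sup>2) \<le> nu * (t / 2 * q\<^sup>2)"
      using assms by (intro mult_left_mono power_mono) auto
    then show ?thesis
      by (simp add: min_le_iff_disj power2_eq_square power3_eq_cube)
  next
    case False
    then have "0 < t"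
      using assms(2) by (cases "t = 0") auto
    from False have "t / (2 * nu * t) \<le> q"
      unfolding q_def using assms pos by (intro divide_left_mono) auto
    have "min (nu * t ^ 3) (t / nu) / 32 \<le> t / nu / 32"
      by (intro divide_right_mono) auto
    also have "\<dots> \<le> t / nu / 8"
      using assms by (intro divide_left_mono) auto
    also have "\<dots> = nu * (t / 2 * (1 / (2 * nu))\<^sup>2)"
      using assms by (simp add: power2_eq_square field_simps)
    also have "\<dots> \<le> nu * (t / 2 * q\<^sup>2)"
      using \<open>t / (2 * nu * t) \<le> q\<close> assms \<open>0 < t\<close>
      by (intro mult_left_mono power_mono) auto
    finally show ?thesis .
  qed
  ultimately show ?thesis
    by linarith
qed

lemma perp_kernel_ge: "(1 - cos (wc * u)) / 2 \<le> perp_kernel wc nu u"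
proof -
  define E where "E = exp (- nu * u)"
  define c where "c = cos (wc * u)"
  have "exp (- 2 * nu * u) = E\<^sup>2"
    by (simp add: E_def power2_eq_square exp_add[symmetric])
  moreover have "(sin (wc * u))\<^sup>2 = 1 - c\<^sup>2"
    by (simp add: c_def sin_squared_eq)
  ultimately have "perp_kernel wc nu u = (1 - c * E)\<^sup>2 + E\<^sup>2 * (1 - c\<^sup>2)"
    unfolding perp_kernel_def c_def[symmetric] E_def[symmetric] by simp
  also have "\<dots> = (1 - E)\<^sup>2 + 2 * E * (1 - c)"
    by algebra
  finally have kernel_eq: "perp_kernel wc nu u = (1 - E)\<^sup>2 + 2 * E * (1 - c)" .
  have "0 \<le> 1 - c" "1 - c \<le> 2" "0 \<le> E"
    by (auto simp: c_def E_def)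
  \<comment> \<open>as \<open>1 - c \<le> 2\<close>, the kernel dominates \<open>(1 - c) / 2 * (1 + E)\<^sup>2 \<ge> (1 - c) / 2\<close>\<close>
  then have "(1 - c) / 2 * (1 - E)\<^sup>2 \<le> (1 - E)\<^sup>2"
    by (intro mult_left_le_one_le) auto
  moreover have "(1 - c) / 2 * 1 \<le> (1 - c) / 2 * (1 + E)\<^sup>2"
    using \<open>0 \<le> 1 - c\<close> \<open>0 \<le> E\<close> by (intro mult_left_mono one_le_power) auto
  moreover have "(1 - c) / 2 * (1 + E)\<^sup>2 = (1 - c) / 2 * (1 - E)\<^sup>2 + 2 * E * (1 - c)"
    by algebra
  ultimately show ?thesis
    unfolding c_def[symmetric] kernel_eq by linarith
qed

lemma integral_one_minus_cos:
  fixes w t :: real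
  assumes "w \<noteq> 0" "0 \<le> t"
  shows "integral {0..t} (\<lambda>u. 1 - cos (w * u)) = t - sin (w * t) / w"
proof -
  have "((\<lambda>u. 1 - cos (w * u))
      has_integral (t - sin (w * t) / w) - (0 - sin (w * 0) / w)) {0..t}"
  proof (rule fundamental_theorem_of_calculus[OF assms(2)])
    fix x :: real
    have "((\<lambda>u. u - sin (w * u) / w) has_real_derivative 1 - cos (w * x))
        (at x within {0..t})"
      using assms(1) by (auto intro!: derivative_eq_intros)
    then show "((\<lambda>u. u - sin (w * u) / w) has_vector_derivative 1 - cos (w * x))
        (at x within {0..t})"
      by (simp add: has_real_derivative_iff_has_vector_derivative)
  qed
  then show ?thesis
    by (simp add: integral_unique)
qed

lemma integral_perp_kernel_ge:
  assumes "0 < wc" "0 \<le> t"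
  shows "min (wc\<^sup>2) 1 * min (t ^ 3) t / 30 \<le> integral {0..t} (perp_kernel wc nu)"
proof -
  have "wc * (min (wc\<^sup>2) 1 * min (t ^ 3) t / 30) \<le> min ((wc * t) ^ 3) (wc * t) / 30"
    using min_cube_mult_ge[of wc t] assms by simp
  also have "\<dots> \<le> (wc * t - sin (wc * t)) / 2"
    using x_minus_sin_ge[of "wc * t"] assms by simp
  also have "\<dots> = wc * integral {0..t} (\<lambda>u. (1 - cos (wc * u)) / 2)"
    using integral_one_minus_cos[of wc t] assms by (simp add: field_simps)
  finally have "min (wc\<^sup>2) 1 * min (t ^ 3) t / 30
      \<le> integral {0..t} (\<lambda>u. (1 - cos (wc * u)) / 2)"
    using assms(1) by simp
  also have "\<dots> \<le> integral {0..t} (perp_kernel wc nu)"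
    by (intro integral_le perp_kernel_ge integrable_continuous_interval continuous_on_perp_kernel
        continuous_intros) auto
  finally show ?thesis .
qed

lemma strict_antimono_on_dampS:
  assumes "0 < nu" "k3 \<noteq> 0"
  shows "strict_antimono_on {0..} (\<lambda>t. dampS wc nu t k1 k2 k3)"
proof (rule monotone_onI)
  fix s t :: real assume st: "s \<in> {0..}" "t \<in> {0..}" "s < t"
  define A where "A = nu * (real_of_int k3)\<^sup>2"
  define C where "C = nu * (real_of_int k1 ^ 2 + real_of_int k2 ^ 2) / (nu\<^sup>2 + wc\<^sup>2)"
  have S: "dampS wc nu r k1 k2 k3 =
      exp (- (A * integral {0..r} (par_kernel nu) + C * integral {0..r} (perp_kernel wc nu)))" for r
    unfolding A_def C_def by (rule dampS_eq_exp)
  have "integral {0..s} (par_kernel nu) < integral {0..t} (par_kernel nu)"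
    using strict_mono_onD[OF strict_mono_on_integral_Icc st] continuous_on_par_kernel
      par_kernel_pos[OF assms(1)] by blast
  moreover have "integral {0..s} (perp_kernel wc nu) \<le> integral {0..t} (perp_kernel wc nu)"
    using mono_onD[OF mono_on_integral_Icc st(1,2)] st(3) continuous_on_perp_kernel
    by (simp add: perp_kernel_def)
  moreover have "0 < A" "0 \<le> C"
    using assms by (auto simp: A_def C_def)
  ultimately have "A * integral {0..s} (par_kernel nu) + C * integral {0..s} (perp_kernel wc nu)
      < A * integral {0..t} (par_kernel nu) + C * integral {0..t} (perp_kernel wc nu)"
    by (intro add_less_le_mono mult_strict_left_mono mult_left_mono)
  then show "dampS wc nu t k1 k2 k3 < dampS wc nu s k1 k2 k3"
    unfolding S by simp
qed

definition decay_rate :: "real \<Rightarrow> real" where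
  "decay_rate wc = min (1 / 32) (min (wc\<^sup>2) 1 / (30 * (1 + wc\<^sup>2)))"

lemma decay_rate_pos: "0 < wc \<Longrightarrow> 0 < decay_rate wc"
  by (simp add: decay_rate_def add_pos_nonneg)

lemma dampS_le:
  assumes "0 < wc" "0 < nu" "nu \<le> 1" "0 \<le> t"
  shows "dampS wc nu t k1 k2 k3 \<le>
           exp (- decay_rate wc * min (nu * (real_of_int k3)\<^sup>2 * t ^ 3) ((real_of_int k3)\<^sup>2 * t / nu))
         * exp (- decay_rate wc * nu * (real_of_int k1 ^ 2 + real_of_int k2 ^ 2) * min (t ^ 3) t)"
proof -
  define K where "K = (real_of_int k3)\<^sup>2"
  define Kp where "Kp = real_of_int k1 ^ 2 + real_of_int k2 ^ 2"
  have K: "0 \<le> K" "0 \<le> Kp"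
    by (simp_all add: K_def Kp_def)
  have rate: "decay_rate wc \<le> 1 / 32" "decay_rate wc \<le> min (wc\<^sup>2) 1 / (30 * (1 + wc\<^sup>2))"
    unfolding decay_rate_def by (rule min.cobounded1 min.cobounded2)+
  have "K * min (nu * t ^ 3) (t / nu) = min (nu * K * t ^ 3) (K * t / nu)"
    using K by (simp add: min_mult_distrib_left mult_ac)
  then have "decay_rate wc * min (nu * K * t ^ 3) (K * t / nu)
      = decay_rate wc * (K * min (nu * t ^ 3) (t / nu))"
    by simp
  also have "\<dots> \<le> 1 / 32 * (K * min (nu * t ^ 3) (t / nu))"
    using K assms by (intro mult_right_mono rate) auto
  also have "\<dots> = K * (min (nu * t ^ 3) (t / nu) / 32)"
    by simp
  also have "\<dots> \<le> K * (nu * integral {0..t} (par_kernel nu))"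
    using integral_par_kernel_ge[of nu t] K assms by (intro mult_left_mono) auto
  finally have par: "decay_rate wc * min (nu * K * t ^ 3) (K * t / nu)
      \<le> nu * K * integral {0..t} (par_kernel nu)"
    by (simp add: mult_ac)
  have "decay_rate wc * nu * Kp * min (t ^ 3) t = decay_rate wc * (nu * Kp * min (t ^ 3) t)"
    by (simp add: mult_ac)
  also have "\<dots> \<le> min (wc\<^sup>2) 1 / (30 * (1 + wc\<^sup>2)) * (nu * Kp * min (t ^ 3) t)"
    using K assms by (intro mult_right_mono rate) auto
  also have "\<dots> = nu * Kp / (1 + wc\<^sup>2) * (min (wc\<^sup>2) 1 * min (t ^ 3) t / 30)"
    by (simp add: field_simps)
  also have "\<dots> \<le> nu * Kp / (nu\<^sup>2 + wc\<^sup>2) * integral {0..t} (perp_kernel wc nu)"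
    using integral_perp_kernel_ge[of wc t nu] K assms
    by (intro mult_mono divide_left_mono) (auto simp: power_le_one add_pos_pos)
  finally have perp: "decay_rate wc * nu * Kp * min (t ^ 3) t
      \<le> nu * Kp / (nu\<^sup>2 + wc\<^sup>2) * integral {0..t} (perp_kernel wc nu)" .
  show ?thesis
    using par perp unfolding dampS_eq_exp K_def[symmetric] Kp_def[symmetric]
    by (simp add: exp_add[symmetric])
qed

theorem mainTheorem7:
  fixes wc :: real
  assumes "wc > 0"
  shows "\<exists>nu1 > 0. \<exists>delta0 > 0. \<forall>nu. 0 < nu \<and> nu < nu1 \<longrightarrow>
           (\<forall>k1 k2 k3 :: int. k3 \<noteq> 0 \<longrightarrow>
              strict_antimono_on {0..} (\<lambda>t. dampS wc nu t k1 k2 k3) \<and>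
              (\<forall>t \<ge> 0.
                 0 < dampS wc nu t k1 k2 k3 \<and>
                 dampS wc nu t k1 k2 k3 \<le>
                   exp (- delta0 * min (nu * (real_of_int k3)\<^sup>2 * t ^ 3) ((real_of_int k3)\<^sup>2 * t / nu))
                 * exp (- delta0 * nu * (real_of_int k1 ^ 2 + real_of_int k2 ^ 2) * min (t ^ 3) t)))"
proof (rule exI[of _ 1], intro conjI exI[of _ "decay_rate wc"] allI impI)
  show "0 < decay_rate wc"
    using assms by (rule decay_rate_pos)
  fix nu :: real and k1 k2 k3 :: int and t :: real
  assume nu: "0 < nu \<and> nu < 1" and "k3 \<noteq> 0"
  then show "strict_antimono_on {0..} (\<lambda>t. dampS wc nu t k1 k2 k3)"
    by (simp add: strict_antimono_on_dampS)
  assume "0 \<le> t"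
  show "0 < dampS wc nu t k1 k2 k3"
    by (simp add: dampS_eq_exp)
  show "dampS wc nu t k1 k2 k3 \<le>
      exp (- decay_rate wc * min (nu * (real_of_int k3)\<^sup>2 * t ^ 3) ((real_of_int k3)\<^sup>2 * t / nu))
    * exp (- decay_rate wc * nu * (real_of_int k1 ^ 2 + real_of_int k2 ^ 2) * min (t ^ 3) t)"
    using assms nu \<open>0 \<le> t\<close> by (intro dampS_le) auto
qed simp

end
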